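(* Consider the setting described in the context and assume $D>2$. For $t\ge 1$ define $\mathcal{I}_0(t)=\bigcup_{m=0}^{t-1}\mathcal{F}_0(m)$, $\mathcal{I}_1(t)=\Big(\bigcup_{m=0}^{t-1}\mathcal{F}_{D-1}(m)\Big)\setminus \mathcal{I}_0(t)$ and $\mathcal{I}_2(t)=V\setminus(\mathcal{I}_0(t)\cup\mathcal{I}_1(t))$. Then for every $t\ge1$, $$\sum_{i\in\mathcal{I}_0(t)}\ \sum_{j\in C_i(t)\cap\mathcal{I}_2(t)} a_j(t-1)\le N.$$
   Context: $G=(V,E)$ is a finite connected undirected graph with node set $V=\{0,\dots,N-1\}$; $\mathcal{N}(i)$ denotes the set of neighbours of $i$. Every edge has length $1$, $d_{ij}$ is the hop distance between $i$ and $j$, and $\mathcal{F}_k(m)=\{i\in V : d_{ik}=m\}$. Every node carries value $v_i=1$. The source set is $S(t)=\{D-1\}$ for $t\le 0$ and $S(t)=\{0\}$ for $t\ge 1$. The integer $D$ satisfies $\max_{i\in V}d_{i0}=D-1$, and nodes are labelled so that $0,1,\dots,D-1$ is a path in which node $i$ is a neighbour of $i+1$ with $d_{0,i}=i$ for $0\le i\le D-1$. The algorithm updates, for $t\ge1$: $\hat d_i(t)=0$ if $i\in S(t)$, and $\hat d_i(t)=\min_{j\in\mathcal{N}(i)}\{\hat d_j(t-1)+1\}$ otherwise; $c_i(t)=i$ if $i\in S(t)$, and otherwise $c_i(t)$ is a minimizer $j\in\mathcal{N}(i)$ of $\hat d_j(t-1)+1$; $C_i(t)=\{j : c_j(t-1)=i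 \text{ and } \hat d_j(t-1)=\hat d_i(t)+1\}$; $a_i(t)=\sum_{j\in C_i(t)}a_j(t-1)+v_i$. Initial values $(\hat d_i(0),c_i(0),a_i(0))$ are steady-state values of these recursions when the source set is constantly $\{D-1\}$; in particular $\hat d_i(0)=m$ for all $i\in\mathcal{F}_{D-1}(m)$, and for every integer $m$, $\sum_{i\in\mathcal{F}_{D-1}(m)}a_i(0)\le N$. *)

theory Defs
  imports Main
begin

text \<open>Graphs: node set V = {0..<N} (nodes are naturals), undirected simple graph given by a
 symmetric irreflexive adjacency relation E on V.\<close>

definition nbrs :: "(nat \<Rightarrow> nat \<Rightarrow> bool) \<Rightarrow> nat \<Rightarrow> nat set" where
  "nbrs E i = {j. E i j}"

definition walk :: "(nat \<Rightarrow> nat \<Rightarrow> bool) \<Rightarrow> nat \<Rightarrow> nat \<Rightarrow> nat \<Rightarrow> bool" where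
  "walk E i j n \<longleftrightarrow> (\<exists>p :: nat \<Rightarrow> nat. p 0 = i \<and> p n = j \<and> (\<forall>k<n. E (p k) (p (Suc k))))"

definition hopdist :: "(nat \<Rightarrow> nat \<Rightarrow> bool) \<Rightarrow> nat \<Rightarrow> nat \<Rightarrow> nat" where
  "hopdist E i j = (LEAST n. walk E i j n)"

definition undirected_graph :: "nat \<Rightarrow> (nat \<Rightarrow> nat \<Rightarrow> bool) \<Rightarrow> bool" where
  "undirected_graph N E \<longleftrightarrow>
     (\<forall>i j. E i j \<longrightarrow> i < N \<and> j < N) \<and> (\<forall>i j. E i j \<longrightarrow> E j i) \<and> (\<forall>i. \<not> E i i)"

definition connected_graph :: "nat \<Rightarrow> (nat \<Rightarrow> nat \<Rightarrow> bool) \<Rightarrow> bool" where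
  "connected_graph N E \<longleftrightarrow> (\<forall>i<N. \<forall>j<N. \<exists>n. walk E i j n)"

definition level :: "nat \<Rightarrow> (nat \<Rightarrow> nat \<Rightarrow> bool) \<Rightarrow> nat \<Rightarrow> nat \<Rightarrow> nat set" where
  "level N E k m = {i. i < N \<and> hopdist E i k = m}"

text \<open>Source set: S(t) = {D-1} for t \<le> 0 (i.e. t = 0), S(t) = {0} for t \<ge> 1.\<close>
definition src :: "nat \<Rightarrow> nat \<Rightarrow> nat set" where
  "src D t = (if t = 0 then {D - 1} else {0})"

definition children :: "nat \<Rightarrow> (nat \<Rightarrow> nat \<Rightarrow> nat) \<Rightarrow> (nat \<Rightarrow> nat \<Rightarrow> nat) \<Rightarrow> nat \<Rightarrow> nat \<Rightarrow> nat set" where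
  "children N dh c t i = {j. j < N \<and> c (t - 1) j = i \<and> dh (t - 1) j = dh t i + 1}"

definition I0 :: "nat \<Rightarrow> (nat \<Rightarrow> nat \<Rightarrow> bool) \<Rightarrow> nat \<Rightarrow> nat set" where
  "I0 N E t = (\<Union>m<t. level N E 0 m)"

definition I1 :: "nat \<Rightarrow> (nat \<Rightarrow> nat \<Rightarrow> bool) \<Rightarrow> nat \<Rightarrow> nat \<Rightarrow> nat set" where
  "I1 N E D t = (\<Union>m<t. level N E (D - 1) m) - I0 N E t"

definition I2 :: "nat \<Rightarrow> (nat \<Rightarrow> nat \<Rightarrow> bool) \<Rightarrow> nat \<Rightarrow> nat \<Rightarrow> nat set" where
  "I2 N E D t = {..<N} - (I0 N E t \<union> I1 N E D t)"

end

theory Submission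
  imports Defs
begin

text \<open>Information from the new source \<open>0\<close> travels one hop per round, so at time \<open>t - 1\<close>
  a node at distance \<open>\<ge> t\<close> from \<open>0\<close> still has an estimate at least its distance to the old
  source \<open>D - 1\<close>; conversely, the estimates never exceed that distance as long as it is at
  least the time. Hence every child \<open>j \<in> I2(t)\<close> of a node of \<open>I0(t)\<close> has old distance and
  estimate both equal to \<open>t\<close>. Following parent pointers backwards in time, every child of a
  node with old distance and estimate \<open>d\<close> has old distance and estimate \<open>d + 1\<close>; so the
  aggregates of these children count disjoint sets of nodes, at most \<open>N\<close> in total.\<close>

lemma walk_0 [simp]: "walk E x y 0 \<longleftrightarrow> x = y"
  unfolding walk_def by auto

lemma walk_Suc: "walk E x y (Suc n) \<longleftrightarrow> (\<exists>x'. E x x' \<and> walk E x' y n)"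
proof
  assume "walk E x y (Suc n)"
  then obtain p where p: "p 0 = x" "p (Suc n) = y" "\<forall>k<Suc n. E (p k) (p (Suc k))"
    unfolding walk_def by blast
  then have "E x (p 1) \<and> walk E (p 1) y n"
    unfolding walk_def by (auto intro!: exI[of _ "\<lambda>k. p (Suc k)"])
  then show "\<exists>x'. E x x' \<and> walk E x' y n" ..
next
  assume "\<exists>x'. E x x' \<and> walk E x' y n"
  then obtain x' p where "E x x'" "p 0 = x'" "p n = y" "\<forall>k<n. E (p k) (p (Suc k))"
    unfolding walk_def by blast
  then show "walk E x y (Suc n)"
    unfolding walk_def
    by (intro exI[of _ "\<lambda>k. case k of 0 \<Rightarrow> x | Suc k \<Rightarrow> p k"]) (auto split: nat.split)
qed

lemma walk_add_split:
  assumes "walk E x z (k + m)"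
  shows "\<exists>y. walk E x y k \<and> walk E y z m"
  using assms by (induction k arbitrary: x) (simp, metis add_Suc walk_Suc)

lemma walk_in_vertices:
  assumes "undirected_graph N E" "walk E x y n" "x < N"
  shows "y < N"
  using assms(2,3)
proof (induction n arbitrary: x)
  case (Suc n)
  then obtain x' where "E x x'" "walk E x' y n" by (auto simp: walk_Suc)
  with Suc.IH assms(1) show ?case unfolding undirected_graph_def by blast
qed simp

lemma walk_hopdist:
  assumes "connected_graph N E" "x < N" "z < N"
  shows "walk E x z (hopdist E x z)"
proof -
  from assms obtain n where "walk E x z n" unfolding connected_graph_def by blast
  then show ?thesis unfolding hopdist_def by (rule LeastI)
qed

lemma hopdist_le: "walk E x z n \<Longrightarrow> hopdist E x z \<le> n"
  unfolding hopdist_def by (rule Least_le)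

lemma hopdist_self [simp]: "hopdist E z z = 0"
  using hopdist_le[of E z z 0] by simp

lemma hopdist_eq_0_iff:
  assumes "connected_graph N E" "x < N" "z < N"
  shows "hopdist E x z = 0 \<longleftrightarrow> x = z"
  using walk_hopdist[OF assms] by auto

lemma hopdist_edge_le:
  assumes "connected_graph N E" "E x y" "y < N" "z < N"
  shows "hopdist E x z \<le> hopdist E y z + 1"
  using assms walk_hopdist[OF assms(1,3,4)] by (auto intro!: hopdist_le simp: walk_Suc)

lemma shortest_walk_prefix:
  assumes "connected_graph N E" "x < N" "z < N" "k \<le> hopdist E x z"
  obtains y where "walk E x y k" "hopdist E y z \<le> hopdist E x z - k"
proof -
  have "walk E x z (k + (hopdist E x z - k))"
    using walk_hopdist[OF assms(1-3)] assms(4) by simp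
  then show ?thesis using that walk_add_split hopdist_le by blast
qed

lemma children_disjoint: "i \<noteq> i' \<Longrightarrow> children N dh c t i \<inter> children N dh c t i' = {}"
  unfolding children_def by auto

lemma sum_UN_children:
  assumes "finite X" "\<And>i. B i \<subseteq> children N dh c t i"
  shows "sum f (\<Union>i\<in>X. B i) = (\<Sum>i\<in>X. sum f (B i))"
proof (rule sum.UNION_disjoint)
  show "\<forall>i\<in>X. finite (B i)"
  proof
    fix i
    have "B i \<subseteq> {..<N}" using assms(2)[of i] by (auto simp: children_def)
    then show "finite (B i)" by (rule finite_subset) simp
  qed
  show "\<forall>i\<in>X. \<forall>i'\<in>X. i \<noteq> i' \<longrightarrow> B i \<inter> B i' = {}"
    using assms(2) children_disjoint by blast
qed (fact assms(1))

text \<open>The recursions are required at every time \<open>t\<close>; at \<open>t = 0\<close> the truncated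
  \<open>t - 1 = 0\<close> turns them into the statement that time \<open>0\<close> is a steady state.\<close>

locale gradient_collection =
  fixes N :: nat and E :: "nat \<Rightarrow> nat \<Rightarrow> bool" and S :: "nat \<Rightarrow> nat set"
    and dh c a :: "nat \<Rightarrow> nat \<Rightarrow> nat" and w :: nat
  assumes graph: "undirected_graph N E"
    and conn: "connected_graph N E"
    and w_vertex: "w < N"
    and dh_init: "x < N \<Longrightarrow> dh 0 x = hopdist E x w"
    and dh_rec: "i < N \<Longrightarrow>
      dh t i = (if i \<in> S t then 0 else Min {dh (t - 1) j + 1 | j. j \<in> nbrs E i})"
    and c_rec: "i < N \<Longrightarrow> i \<notin> S t \<Longrightarrow>
      c t i \<in> nbrs E i \<and> (\<forall>j\<in>nbrs E i. dh (t - 1) (c t i) \<le> dh (t - 1) j)"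
    and a_rec: "i < N \<Longrightarrow> a t i = (\<Sum>j\<in>children N dh c t i. a (t - 1) j) + 1"
begin

lemma edge_vertices: "E x y \<Longrightarrow> x < N \<and> y < N"
  using graph unfolding undirected_graph_def by blast

lemma edge_sym: "E x y \<Longrightarrow> E y x"
  using graph unfolding undirected_graph_def by blast

lemma finite_nbrs: "finite (nbrs E i)"
  by (rule finite_subset[of _ "{..<N}"]) (auto simp: nbrs_def dest: edge_vertices)

lemma dh_eq_Min: "i < N \<Longrightarrow> i \<notin> S t \<Longrightarrow> dh t i = Min ((\<lambda>j. dh (t - 1) j + 1) ` nbrs E i)"
  using dh_rec[of i t] by (simp add: Setcompr_eq_image)

lemma dh_source: "i < N \<Longrightarrow> i \<in> S t \<Longrightarrow> dh t i = 0"
  using dh_rec[of i t] by simp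

lemma edge_parent: "i < N \<Longrightarrow> i \<notin> S t \<Longrightarrow> E i (c t i)"
  using c_rec by (simp add: nbrs_def)

lemma dh_parent:
  assumes "i < N" "i \<notin> S t"
  shows "dh t i = dh (t - 1) (c t i) + 1"
proof -
  have c: "c t i \<in> nbrs E i" "\<forall>j\<in>nbrs E i. dh (t - 1) (c t i) \<le> dh (t - 1) j"
    using c_rec[OF assms] by auto
  show ?thesis
    unfolding dh_eq_Min[OF assms]
    by (rule antisym) (use finite_nbrs c in \<open>auto intro: Min_le Min.boundedI\<close>)
qed

lemma dh_Suc_le_edge:
  assumes "E x y"
  shows "dh (Suc t) x \<le> dh t y + 1"
proof (cases "x \<in> S (Suc t)")
  case False
  have "x < N" using edge_vertices assms by blast
  with False show ?thesis
    unfolding dh_eq_Min[OF \<open>x < N\<close> False]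
    using finite_nbrs assms by (auto intro: Min_le simp: nbrs_def)
qed (use dh_source edge_vertices assms in auto)

lemma dh_le_walk: "walk E x y n \<Longrightarrow> dh (t + n) x \<le> dh t y + n"
proof (induction n arbitrary: x)
  case (Suc n)
  then obtain x' where "E x x'" "walk E x' y n" by (auto simp: walk_Suc)
  with Suc.IH dh_Suc_le_edge[of x x' "t + n"] show ?case by fastforce
qed simp

lemma dh_le_hopdist_init:
  assumes "x < N" "s \<le> hopdist E x w"
  shows "dh s x \<le> hopdist E x w"
proof -
  obtain y where y: "walk E x y s" "hopdist E y w \<le> hopdist E x w - s"
    using shortest_walk_prefix[OF conn assms(1) w_vertex assms(2)] .
  have "y < N" using walk_in_vertices[OF graph y(1) assms(1)] .
  have "dh (0 + s) x \<le> dh 0 y + s" by (rule dh_le_walk[OF y(1)])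
  with y(2) assms(2) dh_init[OF \<open>y < N\<close>] show ?thesis by simp
qed

lemma hopdist_init_le_dh:
  assumes "\<And>r. 0 < r \<Longrightarrow> r \<le> s \<Longrightarrow> S r \<subseteq> {z}" "x < N" "z < N" "s < hopdist E x z"
  shows "hopdist E x w \<le> dh s x"
  using assms
proof (induction s arbitrary: x)
  case 0
  then show ?case using dh_init by simp
next
  case (Suc s)
  have "x \<notin> S (Suc s)"
    using Suc.prems hopdist_eq_0_iff[OF conn] by fastforce
  define y where "y = c (Suc s) x"
  have "E x y" "dh (Suc s) x = dh s y + 1"
    using edge_parent dh_parent \<open>x < N\<close> \<open>x \<notin> S (Suc s)\<close> by (simp_all add: y_def)
  have "y < N" using \<open>E x y\<close> edge_vertices by blast
  have "s < hopdist E y z"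
    using hopdist_edge_le[OF conn \<open>E x y\<close> \<open>y < N\<close> \<open>z < N\<close>] Suc.prems(4) by simp
  then have "hopdist E y w \<le> dh s y"
    using Suc.IH[OF _ \<open>y < N\<close> \<open>z < N\<close>] Suc.prems(1) by simp
  then show ?case
    using hopdist_edge_le[OF conn \<open>E x y\<close> \<open>y < N\<close> w_vertex] \<open>dh (Suc s) x = dh s y + 1\<close>
    by simp
qed

lemma children_next_level:
  assumes "k < N" "hopdist E k w = d" "dh s k = d" "s \<le> d" "j \<in> children N dh c s k"
  shows "hopdist E j w = Suc d \<and> dh (s - 1) j = Suc d"
proof -
  have j: "j < N" "c (s - 1) j = k" "dh (s - 1) j = Suc d"
    using assms(3,5) by (auto simp: children_def)
  then have "j \<notin> S (s - 1)" using dh_source by force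
  then have "E j k" using edge_parent[OF \<open>j < N\<close>] j(2) by metis
  then have "hopdist E j w \<le> Suc d" "d \<le> hopdist E j w + 1"
    using hopdist_edge_le[OF conn _ _ w_vertex] edge_sym assms(1,2) j(1) by fastforce+
  moreover have "dh (s - 1) j \<le> hopdist E j w"
    using dh_le_hopdist_init[OF \<open>j < N\<close>] calculation(2) assms(4) by simp
  ultimately show ?thesis using j(3) by simp
qed

lemma children_crossing_front:
  assumes src: "\<And>r. 0 < r \<Longrightarrow> S r = {z}" and "z < N" "0 < t"
    and "i < N" "hopdist E i z < t" "j \<in> children N dh c t i"
    and "t \<le> hopdist E j z" "t \<le> hopdist E j w"
  shows "hopdist E j w = t \<and> dh (t - 1) j = t"
proof -
  have j: "j < N" "dh (t - 1) j = dh t i + 1"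
    using assms(6) by (auto simp: children_def)
  have "dh ((t - hopdist E i z) + hopdist E i z) i \<le> dh (t - hopdist E i z) z + hopdist E i z"
    by (rule dh_le_walk[OF walk_hopdist[OF conn \<open>i < N\<close> \<open>z < N\<close>]])
  then have "dh t i \<le> hopdist E i z"
    using dh_source[OF \<open>z < N\<close>] src assms(5) by simp
  moreover have "hopdist E j w \<le> dh (t - 1) j"
    by (rule hopdist_init_le_dh) (use src assms(2,3,7) j(1) in auto)
  ultimately show ?thesis using j(2) assms(5,8) by simp
qed

lemma sum_a_le_card:
  assumes "X \<subseteq> {k. k < N \<and> hopdist E k w = d \<and> dh s k = d}" "s \<le> d"
  shows "sum (a s) X \<le> card {k. k < N \<and> d \<le> hopdist E k w}"
  using assms
proof (induction "card {k. k < N \<and> d \<le> hopdist E k w}" arbitrary: s d X rule: less_induct)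
  case less
  let ?far = "\<lambda>d. {k. k < N \<and> d \<le> hopdist E k w}"
  show ?case
  proof (cases "X = {}")
    case False
    have "finite X" using less.prems(1) by (rule finite_subset) simp
    define Y where "Y = (\<Union>k\<in>X. children N dh c s k)"
    have "sum (a s) X = (\<Sum>k\<in>X. sum (a (s - 1)) (children N dh c s k) + 1)"
      by (intro sum.cong refl a_rec) (use less.prems(1) in auto)
    also have "\<dots> = card X + sum (a (s - 1)) Y"
      unfolding Y_def sum_UN_children[OF \<open>finite X\<close> order_refl] by (simp add: sum_Suc)
    also have "sum (a (s - 1)) Y \<le> card (?far (Suc d))"
    proof (rule less.hyps)
      obtain k where "k \<in> X" using False by blast
      with less.prems(1) have "k \<in> ?far d - ?far (Suc d)" by auto
      then have "?far (Suc d) \<subset> ?far d" by auto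
      then show "card (?far (Suc d)) < card (?far d)" by (rule psubset_card_mono[rotated]) simp
      show "Y \<subseteq> {j. j < N \<and> hopdist E j w = Suc d \<and> dh (s - 1) j = Suc d}"
      proof
        fix j
        assume "j \<in> Y"
        then obtain k where "k \<in> X" "j \<in> children N dh c s k" by (auto simp: Y_def)
        with less.prems show "j \<in> {j. j < N \<and> hopdist E j w = Suc d \<and> dh (s - 1) j = Suc d}"
          using children_next_level[of k d s j] by (auto simp: children_def)
      qed
    qed (use less.prems(2) in simp)
    also have "card X + card (?far (Suc d)) \<le> card (?far d)"
    proof -
      have "card X + card (?far (Suc d)) = card (X \<union> ?far (Suc d))"
        using \<open>finite X\<close> less.prems(1) by (intro card_Un_disjoint[symmetric]) auto
      also have "\<dots> \<le> card (?far d)"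
        using less.prems(1) by (intro card_mono) auto
      finally show ?thesis .
    qed
    finally show ?thesis by simp
  qed simp
qed

lemma sum_children_crossing_front_le:
  assumes "\<And>r. 0 < r \<Longrightarrow> S r = {z}" "z < N" "0 < t"
  shows "(\<Sum>i | i < N \<and> hopdist E i z < t.
            \<Sum>j\<in>children N dh c t i \<inter> {j. t \<le> hopdist E j z \<and> t \<le> hopdist E j w}. a (t - 1) j)
         \<le> N" (is "(\<Sum>i\<in>?I. sum _ (?B i)) \<le> N")
proof -
  have "(\<Sum>i\<in>?I. sum (a (t - 1)) (?B i)) = sum (a (t - 1)) (\<Union>i\<in>?I. ?B i)"
    by (intro sum_UN_children[symmetric]) auto
  also have "\<dots> \<le> card {k. k < N \<and> t \<le> hopdist E k w}"
  proof (rule sum_a_le_card)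
    show "(\<Union>i\<in>?I. ?B i) \<subseteq> {j. j < N \<and> hopdist E j w = t \<and> dh (t - 1) j = t}"
      using children_crossing_front[OF assms] by (auto simp: children_def)
  qed simp
  also have "\<dots> \<le> card {..<N}"
    by (rule card_mono) auto
  finally show ?thesis
    by simp
qed

end

lemma gradient_collection_source_switch:
  assumes "undirected_graph N E" "connected_graph N E" "D - 1 < N"
    and ss_d: "\<forall>i<N. dh 0 i = (if i = D - 1 then 0 else Min {dh 0 j + 1 | j. j \<in> nbrs E i})"
    and ss_c: "\<forall>i<N. (if i = D - 1 then c 0 i = i
                  else c 0 i \<in> nbrs E i \<and> (\<forall>j\<in>nbrs E i. dh 0 (c 0 i) + 1 \<le> dh 0 j + 1))"
    and ss_a: "\<forall>i<N. a 0 i = (\<Sum>j\<in>{j. j < N \<and> c 0 j = i \<and> dh 0 j = dh 0 i + 1}. a 0 j) + 1"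
    and ss_level: "\<forall>m. \<forall>i\<in>level N E (D - 1) m. dh 0 i = m"
    and upd_d: "\<forall>t\<ge>1. \<forall>i<N. dh t i = (if i \<in> src D t then 0
                   else Min {dh (t - 1) j + 1 | j. j \<in> nbrs E i})"
    and upd_c: "\<forall>t\<ge>1. \<forall>i<N. (if i \<in> src D t then c t i = i
                   else c t i \<in> nbrs E i \<and>
                        (\<forall>j\<in>nbrs E i. dh (t - 1) (c t i) + 1 \<le> dh (t - 1) j + 1))"
    and upd_a: "\<forall>t\<ge>1. \<forall>i<N. a t i = (\<Sum>j\<in>children N dh c t i. a (t - 1) j) + 1"
  shows "gradient_collection N E (src D) dh c a (D - 1)"
proof
  show "dh 0 x = hopdist E x (D - 1)" if "x < N" for x
    using ss_level that by (auto simp: level_def)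
  show "dh t i = (if i \<in> src D t then 0 else Min {dh (t - 1) j + 1 | j. j \<in> nbrs E i})"
    if "i < N" for t i
    using ss_d upd_d that by (cases t) (auto simp: src_def)
  show "c t i \<in> nbrs E i \<and> (\<forall>j\<in>nbrs E i. dh (t - 1) (c t i) \<le> dh (t - 1) j)"
    if "i < N" "i \<notin> src D t" for t i
  proof (cases "t = 0")
    case True
    then show ?thesis using that ss_c[rule_format, of i] by (simp add: src_def)
  next
    case False
    then show ?thesis using that upd_c[rule_format, of t i] by (simp add: src_def)
  qed
  show "a t i = (\<Sum>j\<in>children N dh c t i. a (t - 1) j) + 1" if "i < N" for t i
  proof (cases "t = 0")
    case True
    then show ?thesis using ss_a[rule_format, OF that] by (simp add: children_def)
  next
    case False
    then show ?thesis using that upd_a[rule_format, of t i] by simp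
  qed
qed (use assms in auto)

theorem lemma4:
  fixes N D :: nat
    and E :: "nat \<Rightarrow> nat \<Rightarrow> bool"
    and dh :: "nat \<Rightarrow> nat \<Rightarrow> nat"  \<comment> \<open>dh t i = \<hat>d_i(t)\<close>
    and c :: "nat \<Rightarrow> nat \<Rightarrow> nat"   \<comment> \<open>c t i = c_i(t)\<close>
    and a :: "nat \<Rightarrow> nat \<Rightarrow> nat"   \<comment> \<open>a t i = a_i(t), with v_i = 1\<close>
  assumes graph: "undirected_graph N E"
    and conn: "connected_graph N E"
    and D_gt: "D > 2"
    and D_ecc: "D - 1 < N" "Max {hopdist E i 0 | i. i < N} = D - 1"
    and path: "\<forall>i. i + 1 \<le> D - 1 \<longrightarrow> E i (i + 1)"
    and path_dist: "\<forall>i\<le>D - 1. hopdist E 0 i = i"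
    \<comment> \<open>steady state for constant source set {D-1} at time 0\<close>
    and ss_d: "\<forall>i<N. dh 0 i = (if i = D - 1 then 0 else Min {dh 0 j + 1 | j. j \<in> nbrs E i})"
    and ss_c: "\<forall>i<N. (if i = D - 1 then c 0 i = i
                  else c 0 i \<in> nbrs E i \<and> (\<forall>j\<in>nbrs E i. dh 0 (c 0 i) + 1 \<le> dh 0 j + 1))"
    and ss_a: "\<forall>i<N. a 0 i = (\<Sum>j\<in>{j. j < N \<and> c 0 j = i \<and> dh 0 j = dh 0 i + 1}. a 0 j) + 1"
    and ss_level: "\<forall>m. \<forall>i\<in>level N E (D - 1) m. dh 0 i = m"
    and ss_sum: "\<forall>m. (\<Sum>i\<in>level N E (D - 1) m. a 0 i) \<le> N"
    \<comment> \<open>the algorithm, for t \<ge> 1\<close>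
    and upd_d: "\<forall>t\<ge>1. \<forall>i<N. dh t i = (if i \<in> src D t then 0
                   else Min {dh (t - 1) j + 1 | j. j \<in> nbrs E i})"
    and upd_c: "\<forall>t\<ge>1. \<forall>i<N. (if i \<in> src D t then c t i = i
                   else c t i \<in> nbrs E i \<and>
                        (\<forall>j\<in>nbrs E i. dh (t - 1) (c t i) + 1 \<le> dh (t - 1) j + 1))"
    and upd_a: "\<forall>t\<ge>1. \<forall>i<N. a t i = (\<Sum>j\<in>children N dh c t i. a (t - 1) j) + 1"
  shows "\<forall>t\<ge>1. (\<Sum>i\<in>I0 N E t. \<Sum>j\<in>children N dh c t i \<inter> I2 N E D t. a (t - 1) j) \<le> N"
proof (intro allI impI)
  interpret gradient_collection N E "src D" dh c a "D - 1"
    using gradient_collection_source_switch[OF graph conn D_ecc(1) ss_d ss_c ss_a ss_level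
        upd_d upd_c upd_a] .
  fix t :: nat
  assume "1 \<le> t"
  have "I0 N E t = {i. i < N \<and> hopdist E i 0 < t}"
    by (auto simp: I0_def level_def)
  moreover have "children N dh c t i \<inter> I2 N E D t
      = children N dh c t i \<inter> {j. t \<le> hopdist E j 0 \<and> t \<le> hopdist E j (D - 1)}" for i
    by (auto simp: children_def I2_def I1_def I0_def level_def)
  ultimately show "(\<Sum>i\<in>I0 N E t. \<Sum>j\<in>children N dh c t i \<inter> I2 N E D t. a (t - 1) j) \<le> N"
    using sum_children_crossing_front_le[of 0 t] D_ecc(1) \<open>1 \<le> t\<close> by (simp add: src_def)
qed

end
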